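(* Let $\|\cdot\|$ be a strictly convex norm on $\mathbb R^2$ that is $C^1$ on $\mathbb R^2\setminus\{0\}$. Then $\mathrm c^{\mathrm{ENT}}(z^+,z^-)\le\Pi(z^+,z^-)$ for all distinct $z^+,z^-\in\partial\mathsf B$.
   Context: $\mathsf B=\{\|z\|<1\}$ normalized so that $\partial\mathsf B$ has length $2\pi$; $\gamma$ is its counterclockwise arc-length parametrization; $\mathbb R^2\cong\mathbb C$, $i$ = rotation by $\pi/2$. $\alpha$ is continuous with $\gamma'=e^{i\alpha}$, and $\Pi(\gamma(\theta_1),\gamma(\theta_2))=\int_{\theta_1}^{\theta_2}\int_{\theta_1}^{\theta_2}|\alpha(t)-\alpha(s)|\,dt\,ds$ for $|\theta_1-\theta_2|\le\pi$. For distinct $z^\pm$: $\nu=i\frac{z^+-z^-}{|z^+-z^-|}$ and $\mathrm c^{\mathrm{ENT}}(z^+,z^-)=\sup_{\lambda\in\Lambda_*}\int_{\theta^-}^{\theta^+}\lambda(t)\gamma'(t)\cdot\nu\,dt$ with $z^\pm=\gamma(\theta^\pm)$, $\Lambda_*=\{\lambda\in C^1(\mathbb R/2\pi\mathbb Z):\int_{\mathbb R/2\pi\mathbb Z}\lambda\gamma'=0,\ \|\lambda'\|_\infty\le1\}$. *)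

theory Defs
  imports "HOL-Complex_Analysis.Complex_Analysis"
begin

text \<open>R^2 is identified with the complex plane. A norm on R^2.\<close>
definition is_norm :: "(complex \<Rightarrow> real) \<Rightarrow> bool" where
  "is_norm N \<longleftrightarrow> (\<forall>x. N x \<ge> 0) \<and> (\<forall>x. N x = 0 \<longleftrightarrow> x = 0)
     \<and> (\<forall>c x. N (c *\<^sub>R x) = \<bar>c\<bar> * N x) \<and> (\<forall>x y. N (x + y) \<le> N x + N y)"

definition strictly_convex_norm :: "(complex \<Rightarrow> real) \<Rightarrow> bool" where
  "strictly_convex_norm N \<longleftrightarrow>
     (\<forall>x y. N x = 1 \<longrightarrow> N y = 1 \<longrightarrow> x \<noteq> y \<longrightarrow> N ((1/2) *\<^sub>R (x + y)) < 1)"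

definition C1_off_origin :: "(complex \<Rightarrow> real) \<Rightarrow> bool" where
  "C1_off_origin N \<longleftrightarrow> (\<exists>D :: complex \<Rightarrow> complex \<Rightarrow>\<^sub>L real.
     (\<forall>x. x \<noteq> 0 \<longrightarrow> (N has_derivative blinfun_apply (D x)) (at x))
     \<and> continuous_on (- {0}) D)"

definition oint :: "real \<Rightarrow> real \<Rightarrow> (real \<Rightarrow> real) \<Rightarrow> real" where
  "oint a b f = (if a \<le> b then integral {a..b} f else - integral {b..a} f)"

definition Lambda_star :: "(real \<Rightarrow> complex) \<Rightarrow> (real \<Rightarrow> real) set" where
  "Lambda_star \<gamma> = {l. (\<forall>t. l (t + 2*pi) = l t)
     \<and> (\<exists>dl. (\<forall>t. (l has_real_derivative dl t) (at t)) \<and> continuous_on UNIV dl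
             \<and> (\<forall>t. \<bar>dl t\<bar> \<le> 1))
     \<and> integral {0..2*pi} (\<lambda>t. l t *\<^sub>R vector_derivative \<gamma> (at t)) = 0}"

definition nu_vec :: "complex \<Rightarrow> complex \<Rightarrow> complex" where
  "nu_vec zp zm = \<i> * (zp - zm) / complex_of_real (cmod (zp - zm))"

definition cENT :: "(real \<Rightarrow> complex) \<Rightarrow> real \<Rightarrow> real \<Rightarrow> real" where
  "cENT \<gamma> thP thM = (SUP l\<in>Lambda_star \<gamma>.
      oint thM thP (\<lambda>t. l t * (vector_derivative \<gamma> (at t) \<bullet> nu_vec (\<gamma> thP) (\<gamma> thM))))"

text \<open>Pi(gamma(th1), gamma(th2)) for |th1 - th2| <= pi.\<close>
definition PiE :: "(real \<Rightarrow> real) \<Rightarrow> real \<Rightarrow> real \<Rightarrow> real" where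
  "PiE \<alpha> th1 th2 = oint th1 th2 (\<lambda>t. oint th1 th2 (\<lambda>s. \<bar>\<alpha> t - \<alpha> s\<bar>))"

end

theory Submission
  imports Defs
begin

text \<open>Put \<open>I = [min \<theta>\<^sup>+ \<theta>\<^sup>-, max \<theta>\<^sup>+ \<theta>\<^sup>-]\<close> and \<open>g = \<gamma>' \<bullet> \<nu>\<close>. Since \<open>\<nu>\<close> is orthogonal to
  \<open>z\<^sup>+ - z\<^sup>-\<close>, the function \<open>g\<close> has mean zero on \<open>I\<close>, hence for every \<open>\<lambda>\<close>
  \<open>2 |I| \<integral>\<^sub>I \<lambda> g = \<integral>\<^sub>I \<integral>\<^sub>I (\<lambda>(t) - \<lambda>(s)) (g(t) - g(s)) ds dt\<close>.
  For \<open>\<lambda> \<in> \<Lambda>\<^sub>*\<close> the first factor is bounded by \<open>|I|\<close>, and \<open>|g(t) - g(s)| \<le> |\<alpha>(t) - \<alpha>(s)|\<close>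
  because \<open>\<gamma>' = e\<^sup>i\<^sup>\<alpha>\<close> and \<open>|\<nu>| = 1\<close>; this gives even \<open>c\<^sup>E\<^sup>N\<^sup>T \<le> \<Pi>/2\<close>.\<close>

lemma continuous_on_product_of_differences:
  fixes l g :: "real \<Rightarrow> real"
  assumes "continuous_on S l" "continuous_on S g"
  shows "continuous_on (S \<times> S) (\<lambda>(t, s). (l t - l s) * (g t - g s))"
  unfolding split_beta
  by (intro continuous_intros continuous_on_compose2[OF assms(1)] continuous_on_compose2[OF assms(2)]) auto

lemma double_integral_product_of_differences:
  fixes l g :: "real \<Rightarrow> real"
  assumes "a \<le> b" "continuous_on {a..b} l" "continuous_on {a..b} g"
  shows "integral {a..b} (\<lambda>t. integral {a..b} (\<lambda>s. (l t - l s) * (g t - g s)))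
       = 2 * ((b - a) * integral {a..b} (\<lambda>t. l t * g t) - integral {a..b} l * integral {a..b} g)"
proof -
  define L G M where "L = integral {a..b} l" and "G = integral {a..b} g"
    and "M = integral {a..b} (\<lambda>t. l t * g t)"
  have l: "(l has_integral L) {a..b}" and g: "(g has_integral G) {a..b}"
    and lg: "((\<lambda>t. l t * g t) has_integral M) {a..b}"
    unfolding L_def G_def M_def using assms(2,3)
    by (auto intro!: integrable_integral integrable_continuous_interval continuous_intros)
  have const: "((\<lambda>_. c) has_integral (b - a) * c) {a..b}" for c
    using has_integral_const_real[of c a b] assms(1) by simp
  have inner: "((\<lambda>s. (l t - l s) * (g t - g s)) has_integral
      (b - a) * (l t * g t) - l t * G - g t * L + M) {a..b}" for t
  proof -
    have "((\<lambda>s. l t * g t - l t * g s - g t * l s + l s * g s) has_integral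
        (b - a) * (l t * g t) - l t * G - g t * L + M) {a..b}"
      by (intro has_integral_add has_integral_diff const
          has_integral_mult_right l g lg)
    then show ?thesis using assms(1) by (simp add: algebra_simps)
  qed
  have "integral {a..b} (\<lambda>t. integral {a..b} (\<lambda>s. (l t - l s) * (g t - g s)))
      = integral {a..b} (\<lambda>t. (b - a) * (l t * g t) - l t * G - g t * L + M)"
    by (simp only: integral_unique[OF inner])
  also have "\<dots> = (b - a) * M - L * G - G * L + (b - a) * M"
    by (intro integral_unique has_integral_add has_integral_diff const
        has_integral_mult_right has_integral_mult_left l g lg)
  finally show ?thesis
    by (simp add: L_def G_def M_def algebra_simps)
qed

lemma abs_integral_mult_mean_zero_le:
  fixes l g \<alpha> :: "real \<Rightarrow> real"
  assumes "a \<le> b" and l: "1-lipschitz_on {a..b} l"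
    and g: "continuous_on {a..b} g" and \<alpha>: "continuous_on {a..b} \<alpha>"
    and g_\<alpha>: "\<And>t s. t \<in> {a..b} \<Longrightarrow> s \<in> {a..b} \<Longrightarrow> \<bar>g t - g s\<bar> \<le> \<bar>\<alpha> t - \<alpha> s\<bar>"
    and mean_zero: "integral {a..b} g = 0"
  shows "2 * \<bar>integral {a..b} (\<lambda>t. l t * g t)\<bar>
       \<le> integral {a..b} (\<lambda>t. integral {a..b} (\<lambda>s. \<bar>\<alpha> t - \<alpha> s\<bar>))"
proof -
  define P where "P t = integral {a..b} (\<lambda>s. (l t - l s) * (g t - g s))" for t
  define F where "F t = integral {a..b} (\<lambda>s. \<bar>\<alpha> t - \<alpha> s\<bar>)" for t
  have cl: "continuous_on {a..b} l" using l by (rule lipschitz_on_continuous_on)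
  have cP: "continuous_on {a..b} P"
    unfolding P_def
    by (rule integral_continuous_on_param[where U="{a..b}" and a=a and b=b, unfolded cbox_interval])
      (rule continuous_on_product_of_differences[OF cl g])
  have cF: "continuous_on {a..b} F"
    unfolding F_def
    by (rule integral_continuous_on_param[where U="{a..b}" and a=a and b=b, unfolded cbox_interval])
      (auto simp: split_beta intro!: continuous_intros continuous_on_compose2[OF \<alpha>])
  have P_le: "\<bar>P t\<bar> \<le> (b - a) * F t" if t: "t \<in> {a..b}" for t
  proof -
    have "norm (P t) \<le> integral {a..b} (\<lambda>s. (b - a) * \<bar>\<alpha> t - \<alpha> s\<bar>)"
      unfolding P_def
    proof (rule integral_norm_bound_integral)
      show "(\<lambda>s. (l t - l s) * (g t - g s)) integrable_on {a..b}"
        by (intro integrable_continuous_interval continuous_intros cl g)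
      show "(\<lambda>s. (b - a) * \<bar>\<alpha> t - \<alpha> s\<bar>) integrable_on {a..b}"
        by (intro integrable_continuous_interval continuous_intros \<alpha>)
      fix s assume s: "s \<in> {a..b}"
      have "\<bar>l t - l s\<bar> \<le> b - a"
        using lipschitz_onD[OF l t s] t s by (auto simp: dist_real_def)
      then show "norm ((l t - l s) * (g t - g s)) \<le> (b - a) * \<bar>\<alpha> t - \<alpha> s\<bar>"
        by (simp add: abs_mult mult_mono g_\<alpha>[OF t s])
    qed
    then show ?thesis by (simp add: F_def)
  qed
  have "(b - a) * (2 * \<bar>integral {a..b} (\<lambda>t. l t * g t)\<bar>) = \<bar>integral {a..b} P\<bar>"
    using double_integral_product_of_differences[OF assms(1) cl g] assms(1)
    by (simp add: P_def[abs_def] mean_zero abs_mult)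
  also have "\<dots> \<le> integral {a..b} (\<lambda>t. (b - a) * F t)"
    using integral_norm_bound_integral[of P "{a..b}" "\<lambda>t. (b - a) * F t"] P_le
    by (simp add: integrable_continuous_interval cP cF continuous_on_mult_left)
  also have "\<dots> = (b - a) * integral {a..b} F" by simp
  finally show ?thesis
    using assms(1) by (cases "a = b") (auto simp: F_def[abs_def])
qed

lemma norm_exp_i_diff_le: "cmod (exp (\<i> * of_real x) - exp (\<i> * of_real y)) \<le> \<bar>x - y\<bar>"
proof -
  have "exp (\<i> * of_real x) - exp (\<i> * of_real y) = exp (\<i> * of_real y) * (exp (\<i> * of_real (x - y)) - 1)"
    by (simp add: algebra_simps flip: exp_add)
  then have "cmod (exp (\<i> * of_real x) - exp (\<i> * of_real y)) = 2 * \<bar>sin ((x - y) / 2)\<bar>"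
    by (simp only: norm_mult norm_exp_i_times dist_exp_i_1 mult_1)
  also have "\<dots> \<le> \<bar>x - y\<bar>"
    using abs_sin_x_le_abs_x[of "(x - y) / 2"] by simp
  finally show ?thesis .
qed

lemma abs_inner_exp_i_diff_le:
  assumes "norm v \<le> 1"
  shows "\<bar>exp (\<i> * of_real x) \<bullet> v - exp (\<i> * of_real y) \<bullet> v\<bar> \<le> \<bar>x - y\<bar>"
proof -
  have "\<bar>exp (\<i> * of_real x) \<bullet> v - exp (\<i> * of_real y) \<bullet> v\<bar>
      \<le> cmod (exp (\<i> * of_real x) - exp (\<i> * of_real y)) * norm v"
    unfolding inner_diff_left[symmetric] by (rule Cauchy_Schwarz_ineq2)
  also have "\<dots> \<le> \<bar>x - y\<bar>"
    using mult_mono[OF norm_exp_i_diff_le assms] by simp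
  finally show ?thesis .
qed

lemma bounded_real_derivative_imp_lipschitz:
  fixes f f' :: "real \<Rightarrow> real"
  assumes "\<And>t. (f has_real_derivative f' t) (at t)" and "\<And>t. \<bar>f' t\<bar> \<le> C"
  shows "C-lipschitz_on UNIV f"
proof (rule bounded_derivative_imp_lipschitz)
  show "(f has_derivative (\<lambda>h. id h *\<^sub>R f' t)) (at t within UNIV)" for t
    using assms(1) by (simp add: has_field_derivative_def mult_commute_abs)
  show "onorm (\<lambda>h. id h *\<^sub>R f' t) \<le> C" for t
    using assms(2)[of t] onorm_scaleR_left[OF bounded_linear_ident, of "f' t"] by (simp add: onorm_id)
  show "0 \<le> C"
    using assms(2) abs_ge_zero order_trans by blast
qed simp

lemma Lambda_star_lipschitz: "l \<in> Lambda_star \<gamma> \<Longrightarrow> 1-lipschitz_on UNIV l"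
  unfolding Lambda_star_def by (auto intro: bounded_real_derivative_imp_lipschitz)

lemma zero_in_Lambda_star: "(\<lambda>_. 0) \<in> Lambda_star \<gamma>"
  unfolding Lambda_star_def by (auto intro!: exI[of _ "\<lambda>_. 0"])

lemma inner_nu_vec: "(zp - zm) \<bullet> nu_vec zp zm = 0"
  by (simp add: nu_vec_def inner_complex_def add_divide_distrib[symmetric] algebra_simps)

lemma norm_nu_vec: "zp \<noteq> zm \<Longrightarrow> norm (nu_vec zp zm) = 1"
  by (simp add: nu_vec_def norm_divide norm_mult)

lemma integral_inner_vector_derivative:
  fixes f f' :: "real \<Rightarrow> 'a::euclidean_space"
  assumes "a \<le> b" and "\<And>t. (f has_vector_derivative f' t) (at t)"
  shows "integral {a..b} (\<lambda>t. f' t \<bullet> v) = (f b - f a) \<bullet> v"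
proof -
  have "(f' has_integral f b - f a) {a..b}"
    using assms by (intro fundamental_theorem_of_calculus) (auto intro: has_vector_derivative_at_within)
  from has_integral_linear[OF this bounded_linear_inner_left[of v]] show ?thesis
    by (simp add: o_def integral_unique)
qed

lemma integral_inner_nu_vec_eq_0:
  assumes "\<And>t. (\<gamma> has_vector_derivative \<gamma>' t) (at t)"
  shows "integral {min p m..max p m} (\<lambda>t. \<gamma>' t \<bullet> nu_vec (\<gamma> p) (\<gamma> m)) = 0"
proof -
  have "(\<gamma> (max p m) - \<gamma> (min p m)) \<bullet> nu_vec (\<gamma> p) (\<gamma> m) = 0"
    using inner_nu_vec[of "\<gamma> p" "\<gamma> m"] inner_minus_left[of "\<gamma> p - \<gamma> m"]
    by (auto simp: min_def max_def)
  with integral_inner_vector_derivative[of "min p m" "max p m" \<gamma> \<gamma>', OF _ assms] show ?thesis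
    by simp
qed

lemma oint_le_abs_integral: "oint a b f \<le> \<bar>integral {min a b..max a b} f\<bar>"
  unfolding oint_def by (auto simp: min_def max_def)

lemma PiE_eq_integral:
  "PiE \<alpha> a b = integral {min a b..max a b} (\<lambda>t. integral {min a b..max a b} (\<lambda>s. \<bar>\<alpha> t - \<alpha> s\<bar>))"
  unfolding PiE_def oint_def by (auto simp: min_def max_def integral_neg)

theorem lemma6p5:
  fixes N :: "complex \<Rightarrow> real" and \<gamma> :: "real \<Rightarrow> complex" and \<alpha> :: "real \<Rightarrow> real"
    and thP thM :: real
  assumes "is_norm N" and "strictly_convex_norm N" and "C1_off_origin N"
    and "\<forall>t. \<gamma> (t + 2*pi) = \<gamma> t"
    and "bij_betw \<gamma> {0..<2*pi} {z. N z = 1}"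
    and "\<forall>t. (\<gamma> has_vector_derivative exp (\<i> * complex_of_real (\<alpha> t))) (at t)"
    and "continuous_on UNIV \<alpha>"
    and "winding_number (\<lambda>u. \<gamma> (2 * pi * u)) 0 = 1"
    and "\<bar>thP - thM\<bar> \<le> pi" and "\<gamma> thP \<noteq> \<gamma> thM"
  shows "cENT \<gamma> thP thM \<le> PiE \<alpha> thP thM"
proof -
  define \<nu> where "\<nu> = nu_vec (\<gamma> thP) (\<gamma> thM)"
  define g where "g t = exp (\<i> * of_real (\<alpha> t)) \<bullet> \<nu>" for t
  define I where "I = {min thP thM..max thP thM}"
  have \<gamma>': "vector_derivative \<gamma> (at t) = exp (\<i> * of_real (\<alpha> t))" for t
    using assms(6) vector_derivative_at by blast
  have g_\<alpha>: "\<bar>g t - g s\<bar> \<le> \<bar>\<alpha> t - \<alpha> s\<bar>" for t s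
    unfolding g_def \<nu>_def using abs_inner_exp_i_diff_le norm_nu_vec[OF assms(10)] by simp
  have g_cont: "continuous_on UNIV g"
    unfolding g_def[abs_def] by (intro continuous_intros assms(7))
  have mean_zero: "integral I g = 0"
    unfolding I_def g_def[abs_def] \<nu>_def by (rule integral_inner_nu_vec_eq_0) (use assms(6) in blast)
  have "oint thM thP (\<lambda>t. l t * (vector_derivative \<gamma> (at t) \<bullet> \<nu>)) \<le> PiE \<alpha> thP thM"
    if l: "l \<in> Lambda_star \<gamma>" for l
  proof -
    have "oint thM thP (\<lambda>t. l t * (vector_derivative \<gamma> (at t) \<bullet> \<nu>)) \<le> \<bar>integral I (\<lambda>t. l t * g t)\<bar>"
      using oint_le_abs_integral[of thM thP] unfolding I_def g_def \<gamma>' min.commute[of thP] max.commute[of thP] .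
    also have "\<dots> \<le> 2 * \<bar>integral I (\<lambda>t. l t * g t)\<bar>" by simp
    also have "\<dots> \<le> integral I (\<lambda>t. integral I (\<lambda>s. \<bar>\<alpha> t - \<alpha> s\<bar>))"
      unfolding I_def
      by (rule abs_integral_mult_mean_zero_le)
        (use lipschitz_on_subset[OF Lambda_star_lipschitz[OF l]] g_\<alpha> mean_zero in
          \<open>auto simp: I_def intro: continuous_on_subset[OF g_cont] continuous_on_subset[OF assms(7)]\<close>)
    also have "\<dots> = PiE \<alpha> thP thM"
      unfolding I_def by (rule PiE_eq_integral[symmetric])
    finally show ?thesis .
  qed
  then show ?thesis
    unfolding cENT_def \<nu>_def by (intro cSUP_least) (auto intro: zero_in_Lambda_star)
qed

end
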